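(* Let $R$ be a graded polynomial ring over $\mathbb F_2$ and let $0\to A\xrightarrow{\alpha}B\to C\to0$ be a short exact sequence of free differential graded $R$-modules such that $H_*(A)$ and $H_*(B)$ are free $R$-modules. Then the short exact sequence $$0\to\operatorname{coker}\alpha_*\to H_*(C)\to\ker\alpha_*\to0$$ derived from the long exact homology sequence (with $\alpha_*:H_*(A)\to H_*(B)$) splits as a sequence of $R$-modules. *)

theory Defs
  imports Main "HOL-Library.Poly_Mapping" "HOL-Library.Z2"
begin

text \<open>Polynomials over F_2 (type bit) in the variables x_v, v :: nat; monomials are
  finitely supported exponent vectors.  The ring R consists of the polynomials whose
  monomials only involve variables from the finite set V; the variable x_v has degree w v.\<close>

type_synonym rpoly = "(nat \<Rightarrow>\<^sub>0 nat) \<Rightarrow>\<^sub>0 bit"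

definition mdeg :: "(nat \<Rightarrow> int) \<Rightarrow> (nat \<Rightarrow>\<^sub>0 nat) \<Rightarrow> int" where
  "mdeg w m = (\<Sum>v\<in>Poly_Mapping.keys m. int (Poly_Mapping.lookup m v) * w v)"

text \<open>Homogeneous elements of R of degree i (0 is homogeneous of every degree).\<close>
definition Rh :: "nat set \<Rightarrow> (nat \<Rightarrow> int) \<Rightarrow> int \<Rightarrow> rpoly set" where
  "Rh V w i = {p. \<forall>m\<in>Poly_Mapping.keys p. Poly_Mapping.keys m \<subseteq> V \<and> mdeg w m = i}"

definition graded_poly_ring :: "nat set \<Rightarrow> (nat \<Rightarrow> int) \<Rightarrow> bool" where
  "graded_poly_ring V w \<longleftrightarrow> finite V \<and> ((\<forall>v\<in>V. w v > 0) \<or> (\<forall>v\<in>V. w v < 0))"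

text \<open>A graded module is given by its homogeneous components cmp k, the addition and zero
  in each degree, and the action gact i r k x of a homogeneous r of degree i on
  x of degree k (result in degree i + k).\<close>

record 'a gmod =
  cmp :: "int \<Rightarrow> 'a set"
  gadd :: "int \<Rightarrow> 'a \<Rightarrow> 'a \<Rightarrow> 'a"
  gzero :: "int \<Rightarrow> 'a"
  gact :: "int \<Rightarrow> rpoly \<Rightarrow> int \<Rightarrow> 'a \<Rightarrow> 'a"

definition gmodule :: "nat set \<Rightarrow> (nat \<Rightarrow> int) \<Rightarrow> 'a gmod \<Rightarrow> bool" where
  "gmodule V w M \<longleftrightarrow>
     (\<forall>k. gzero M k \<in> cmp M k) \<and>
     (\<forall>k. \<forall>x\<in>cmp M k. \<forall>y\<in>cmp M k. gadd M k x y \<in> cmp M k) \<and>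
     (\<forall>k. \<forall>x\<in>cmp M k. \<forall>y\<in>cmp M k. \<forall>z\<in>cmp M k.
         gadd M k (gadd M k x y) z = gadd M k x (gadd M k y z)) \<and>
     (\<forall>k. \<forall>x\<in>cmp M k. \<forall>y\<in>cmp M k. gadd M k x y = gadd M k y x) \<and>
     (\<forall>k. \<forall>x\<in>cmp M k. gadd M k (gzero M k) x = x) \<and>
     (\<forall>k. \<forall>x\<in>cmp M k. \<exists>y\<in>cmp M k. gadd M k x y = gzero M k) \<and>
     (\<forall>i r k x. r \<in> Rh V w i \<and> x \<in> cmp M k \<longrightarrow> gact M i r k x \<in> cmp M (i + k)) \<and>
     (\<forall>i r s k x. r \<in> Rh V w i \<and> s \<in> Rh V w i \<and> x \<in> cmp M k \<longrightarrow>
         gact M i (r + s) k x = gadd M (i + k) (gact M i r k x) (gact M i s k x)) \<and>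
     (\<forall>i r k x y. r \<in> Rh V w i \<and> x \<in> cmp M k \<and> y \<in> cmp M k \<longrightarrow>
         gact M i r k (gadd M k x y) = gadd M (i + k) (gact M i r k x) (gact M i r k y)) \<and>
     (\<forall>i j r s k x. r \<in> Rh V w i \<and> s \<in> Rh V w j \<and> x \<in> cmp M k \<longrightarrow>
         gact M (i + j) (r * s) k x = gact M i r (j + k) (gact M j s k x)) \<and>
     (\<forall>k x. x \<in> cmp M k \<longrightarrow> gact M 0 1 k x = x)"

definition ghom :: "nat set \<Rightarrow> (nat \<Rightarrow> int) \<Rightarrow> 'a gmod \<Rightarrow> 'b gmod \<Rightarrow> int
                    \<Rightarrow> (int \<Rightarrow> 'a \<Rightarrow> 'b) \<Rightarrow> bool" where
  "ghom V w M N e f \<longleftrightarrow>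
     (\<forall>k x. x \<in> cmp M k \<longrightarrow> f k x \<in> cmp N (k + e)) \<and>
     (\<forall>k x y. x \<in> cmp M k \<and> y \<in> cmp M k \<longrightarrow>
         f k (gadd M k x y) = gadd N (k + e) (f k x) (f k y)) \<and>
     (\<forall>i r k x. r \<in> Rh V w i \<and> x \<in> cmp M k \<longrightarrow>
         f (i + k) (gact M i r k x) = gact N i r (k + e) (f k x))"

text \<open>Differential graded R-modules (differential of degree -1; over F_2 no signs occur).\<close>
definition dgmodule :: "nat set \<Rightarrow> (nat \<Rightarrow> int) \<Rightarrow> 'a gmod \<Rightarrow> (int \<Rightarrow> 'a \<Rightarrow> 'a) \<Rightarrow> bool" where
  "dgmodule V w M d \<longleftrightarrow> gmodule V w M \<and> ghom V w M M (-1) d \<and>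
     (\<forall>k x. x \<in> cmp M k \<longrightarrow> d (k - 1) (d k x) = gzero M (k - 2))"

text \<open>Free graded modules: existence of a homogeneous basis (bas j = basis elements of degree j).\<close>
fun lincomb :: "'a gmod \<Rightarrow> int \<Rightarrow> (int \<times> 'a \<times> rpoly) list \<Rightarrow> 'a" where
  "lincomb M k [] = gzero M k"
| "lincomb M k ((j, b, r) # xs) = gadd M k (gact M (k - j) r j b) (lincomb M k xs)"

definition gfree :: "nat set \<Rightarrow> (nat \<Rightarrow> int) \<Rightarrow> 'a gmod \<Rightarrow> bool" where
  "gfree V w M \<longleftrightarrow> (\<exists>bas :: int \<Rightarrow> 'a set.
     (\<forall>j. bas j \<subseteq> cmp M j) \<and>
     (\<forall>k x. x \<in> cmp M k \<longrightarrow>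
        (\<exists>xs. (\<forall>(j, b, r)\<in>set xs. b \<in> bas j \<and> r \<in> Rh V w (k - j)) \<and> x = lincomb M k xs)) \<and>
     (\<forall>k xs. (\<forall>(j, b, r)\<in>set xs. b \<in> bas j \<and> r \<in> Rh V w (k - j)) \<and>
        distinct (map (\<lambda>(j, b, r). (j, b)) xs) \<and> lincomb M k xs = gzero M k \<longrightarrow>
        (\<forall>(j, b, r)\<in>set xs. r = 0)))"

definition zcyc :: "'a gmod \<Rightarrow> (int \<Rightarrow> 'a \<Rightarrow> 'a) \<Rightarrow> int \<Rightarrow> 'a set" where
  "zcyc M d k = {z \<in> cmp M k. d k z = gzero M (k - 1)}"

definition bdry :: "'a gmod \<Rightarrow> (int \<Rightarrow> 'a \<Rightarrow> 'a) \<Rightarrow> int \<Rightarrow> 'a set" where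
  "bdry M d k = d (k + 1) ` cmp M (k + 1)"

text \<open>The homology class of a cycle z of degree k: the coset z + B_k.\<close>
definition hcls :: "'a gmod \<Rightarrow> (int \<Rightarrow> 'a \<Rightarrow> 'a) \<Rightarrow> int \<Rightarrow> 'a \<Rightarrow> 'a set" where
  "hcls M d k z = {gadd M k z b | b. b \<in> bdry M d k}"

definition homology :: "'a gmod \<Rightarrow> (int \<Rightarrow> 'a \<Rightarrow> 'a) \<Rightarrow> 'a set gmod" where
  "homology M d =
     \<lparr> cmp = (\<lambda>k. hcls M d k ` zcyc M d k),
       gadd = (\<lambda>k X Y. hcls M d k (gadd M k (SOME x. x \<in> X) (SOME y. y \<in> Y))),
       gzero = (\<lambda>k. hcls M d k (gzero M k)),
       gact = (\<lambda>i r k X. hcls M d (i + k) (gact M i r k (SOME x. x \<in> X))) \<rparr>"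

definition hmap :: "'b gmod \<Rightarrow> (int \<Rightarrow> 'b \<Rightarrow> 'b) \<Rightarrow> int \<Rightarrow> (int \<Rightarrow> 'a \<Rightarrow> 'b)
                    \<Rightarrow> int \<Rightarrow> 'a set \<Rightarrow> 'b set" where
  "hmap N dN e f k X = hcls N dN (k + e) (f k (SOME x. x \<in> X))"

definition chain_map :: "'a gmod \<Rightarrow> (int \<Rightarrow> 'a \<Rightarrow> 'a) \<Rightarrow> (int \<Rightarrow> 'b \<Rightarrow> 'b)
                         \<Rightarrow> (int \<Rightarrow> 'a \<Rightarrow> 'b) \<Rightarrow> bool" where
  "chain_map M dM dN f \<longleftrightarrow> (\<forall>k x. x \<in> cmp M k \<longrightarrow> dN k (f k x) = f (k - 1) (dM k x))"

definition dg_ses :: "nat set \<Rightarrow> (nat \<Rightarrow> int) \<Rightarrow>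
     'a gmod \<Rightarrow> (int \<Rightarrow> 'a \<Rightarrow> 'a) \<Rightarrow> 'b gmod \<Rightarrow> (int \<Rightarrow> 'b \<Rightarrow> 'b) \<Rightarrow> 'c gmod \<Rightarrow> (int \<Rightarrow> 'c \<Rightarrow> 'c)
     \<Rightarrow> (int \<Rightarrow> 'a \<Rightarrow> 'b) \<Rightarrow> (int \<Rightarrow> 'b \<Rightarrow> 'c) \<Rightarrow> bool" where
  "dg_ses V w A dA B dB C dC \<alpha> \<beta> \<longleftrightarrow>
     dgmodule V w A dA \<and> dgmodule V w B dB \<and> dgmodule V w C dC \<and>
     ghom V w A B 0 \<alpha> \<and> ghom V w B C 0 \<beta> \<and>
     chain_map A dA dB \<alpha> \<and> chain_map B dB dC \<beta> \<and>
     (\<forall>k. inj_on (\<alpha> k) (cmp A k)) \<and>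
     (\<forall>k. \<beta> k ` cmp B k = cmp C k) \<and>
     (\<forall>k. {b \<in> cmp B k. \<beta> k b = gzero C k} = \<alpha> k ` cmp A k)"

text \<open>Connecting homomorphism H_k(C) -> H_{k-1}(A): lift c to b, then d b = alpha(a).\<close>
definition connecting :: "'a gmod \<Rightarrow> (int \<Rightarrow> 'a \<Rightarrow> 'a) \<Rightarrow> 'b gmod \<Rightarrow> (int \<Rightarrow> 'b \<Rightarrow> 'b)
     \<Rightarrow> (int \<Rightarrow> 'a \<Rightarrow> 'b) \<Rightarrow> (int \<Rightarrow> 'b \<Rightarrow> 'c) \<Rightarrow> int \<Rightarrow> 'c set \<Rightarrow> 'a set" where
  "connecting A dA B dB \<alpha> \<beta> k X =
     hcls A dA (k - 1)
       (SOME a. a \<in> cmp A (k - 1) \<and>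
          \<alpha> (k - 1) a = dB k (SOME b. b \<in> cmp B k \<and> \<beta> k b = (SOME c. c \<in> X)))"

definition ker_hmap :: "'a gmod \<Rightarrow> (int \<Rightarrow> 'a \<Rightarrow> 'a) \<Rightarrow> 'b gmod \<Rightarrow> (int \<Rightarrow> 'b \<Rightarrow> 'b)
     \<Rightarrow> (int \<Rightarrow> 'a \<Rightarrow> 'b) \<Rightarrow> 'a set gmod" where
  "ker_hmap A dA B dB \<alpha> =
     (homology A dA)\<lparr> cmp := (\<lambda>k. {X \<in> cmp (homology A dA) k.
                                  hmap B dB 0 \<alpha> k X = gzero (homology B dB) k}) \<rparr>"

end

theory Submission
  imports Defs
begin

text \<open>Choose R-linear maps \<phi> : H(A) \<rightarrow> Z(A) and \<psi> : H(B) \<rightarrow> Z(B) picking representing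
  cycles; they exist because H(A) and H(B) are free (define them on a basis).  For a class X
  of H(A) the cycles \<alpha>(\<phi> X) and \<psi>[\<alpha>(\<phi> X)] are homologous, so their sum is a boundary
  d(L X), with L : H(A) \<rightarrow> B R-linear of degree 1, again by freeness of H(A).  If \<alpha>_* X = 0
  the second cycle is \<psi> 0 = 0, so d(L X) = \<alpha>(\<phi> X); then \<beta>(L X) is a cycle of C, and by
  construction of the connecting map its class is sent back to [\<phi> X] = X.  Thus
  X \<mapsto> [\<beta>(L X)] is an R-linear section of H(C) \<rightarrow> ker \<alpha>_*.  Over F_2 no signs occur, and every
  element of a module is its own negative.\<close>

lemma mdeg_add: "mdeg w (m1 + m2) = mdeg w m1 + mdeg w m2"
  unfolding mdeg_def by (rule setsum_keys_plus_distrib) (auto simp: algebra_simps)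

lemma Rh_zero [simp]: "0 \<in> Rh V w i"
  by (simp add: Rh_def)

lemma Rh_one [simp]: "1 \<in> Rh V w 0"
  by (simp add: Rh_def mdeg_def)

lemma Rh_add: "r \<in> Rh V w i \<Longrightarrow> s \<in> Rh V w i \<Longrightarrow> r + s \<in> Rh V w i"
  unfolding Rh_def using keys_add[of r s] by blast

lemma Rh_mult:
  assumes r: "r \<in> Rh V w i" and s: "s \<in> Rh V w j"
  shows "r * s \<in> Rh V w (i + j)"
  unfolding Rh_def mem_Collect_eq
proof
  fix m assume "m \<in> Poly_Mapping.keys (r * s)"
  then obtain a b where m: "m = a + b"
    and a: "a \<in> Poly_Mapping.keys r" and b: "b \<in> Poly_Mapping.keys s"
    using keys_mult[of r s] by blast
  have "Poly_Mapping.keys a \<subseteq> V" "Poly_Mapping.keys b \<subseteq> V" "mdeg w a = i" "mdeg w b = j"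
    using a b r s unfolding Rh_def by auto
  then show "Poly_Mapping.keys m \<subseteq> V \<and> mdeg w m = i + j"
    using keys_add[of a b] by (auto simp: m mdeg_add)
qed

lemma rpoly_one_add_one: "(1::rpoly) + 1 = 0"
proof -
  have "Poly_Mapping.single (0::nat \<Rightarrow>\<^sub>0 nat) ((1::bit) + 1) = 0"
    by simp
  then show ?thesis
    by (simp only: single_add single_one)
qed

locale graded_module =
  fixes V :: "nat set" and w :: "nat \<Rightarrow> int" and M :: "'a gmod"
  assumes gmodule: "gmodule V w M"
begin

lemmas gmodule_axioms = gmodule[unfolded gmodule_def]

lemma zero_closed [simp]: "gzero M k \<in> cmp M k"
  using gmodule_axioms by (elim conjE) (blast | simp)

lemma add_closed [simp]: "x \<in> cmp M k \<Longrightarrow> y \<in> cmp M k \<Longrightarrow> gadd M k x y \<in> cmp M k"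
  using gmodule_axioms by (elim conjE) (blast | simp)

lemma add_assoc: "x \<in> cmp M k \<Longrightarrow> y \<in> cmp M k \<Longrightarrow> z \<in> cmp M k \<Longrightarrow>
    gadd M k (gadd M k x y) z = gadd M k x (gadd M k y z)"
  using gmodule_axioms by (elim conjE) (blast | simp)

lemma add_commute: "x \<in> cmp M k \<Longrightarrow> y \<in> cmp M k \<Longrightarrow> gadd M k x y = gadd M k y x"
  using gmodule_axioms by (elim conjE) (blast | simp)

lemma add_zero_left [simp]: "x \<in> cmp M k \<Longrightarrow> gadd M k (gzero M k) x = x"
  using gmodule_axioms by (elim conjE) (blast | simp)

lemma add_inverse: "x \<in> cmp M k \<Longrightarrow> \<exists>y\<in>cmp M k. gadd M k x y = gzero M k"
  using gmodule_axioms by (elim conjE) (blast | simp)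

lemma act_closed: "r \<in> Rh V w i \<Longrightarrow> x \<in> cmp M k \<Longrightarrow> gact M i r k x \<in> cmp M (i + k)"
  using gmodule_axioms by (elim conjE) (blast | simp)

lemma act_add_scalar: "r \<in> Rh V w i \<Longrightarrow> s \<in> Rh V w i \<Longrightarrow> x \<in> cmp M k \<Longrightarrow>
    gact M i (r + s) k x = gadd M (i + k) (gact M i r k x) (gact M i s k x)"
  using gmodule_axioms by (elim conjE) (blast | simp)

lemma act_add: "r \<in> Rh V w i \<Longrightarrow> x \<in> cmp M k \<Longrightarrow> y \<in> cmp M k \<Longrightarrow>
    gact M i r k (gadd M k x y) = gadd M (i + k) (gact M i r k x) (gact M i r k y)"
  using gmodule_axioms by (elim conjE) (blast | simp)

lemma act_mult: "r \<in> Rh V w i \<Longrightarrow> s \<in> Rh V w j \<Longrightarrow> x \<in> cmp M k \<Longrightarrow>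
    gact M (i + j) (r * s) k x = gact M i r (j + k) (gact M j s k x)"
  using gmodule_axioms by (elim conjE) (blast | simp)

lemma act_one [simp]: "x \<in> cmp M k \<Longrightarrow> gact M 0 1 k x = x"
  using gmodule_axioms by (elim conjE) (blast | simp)

lemma add_zero_right [simp]: "x \<in> cmp M k \<Longrightarrow> gadd M k x (gzero M k) = x"
  using add_commute[of x k "gzero M k"] by simp

lemma idem_zero:
  assumes x: "x \<in> cmp M k" and idem: "gadd M k x x = x"
  shows "x = gzero M k"
proof -
  obtain y where y: "y \<in> cmp M k" "gadd M k x y = gzero M k"
    using add_inverse[OF x] by blast
  have "x = gadd M k x (gadd M k x y)"
    using x y by simp
  also have "\<dots> = gzero M k"
    using add_assoc[OF x x y(1)] idem y by simp
  finally show ?thesis .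
qed

lemma act_zero_scalar [simp]:
  assumes x: "x \<in> cmp M k" shows "gact M i 0 k x = gzero M (i + k)"
  using idem_zero[OF act_closed[OF Rh_zero x]] act_add_scalar[OF Rh_zero Rh_zero x] by simp

lemma act_zero_vector [simp]:
  assumes r: "r \<in> Rh V w i" shows "gact M i r k (gzero M k) = gzero M (i + k)"
  using idem_zero[OF act_closed[OF r zero_closed]] act_add[OF r zero_closed zero_closed] by simp

lemma add_self [simp]:
  assumes x: "x \<in> cmp M k" shows "gadd M k x x = gzero M k"
proof -
  have "gadd M k x x = gact M 0 (1 + 1) k x"
    using act_add_scalar[OF Rh_one Rh_one x] x by simp
  also have "\<dots> = gzero M k"
    using x by (simp only: rpoly_one_add_one act_zero_scalar) simp
  finally show ?thesis .
qed

lemma add_self_left: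
  "x \<in> cmp M k \<Longrightarrow> y \<in> cmp M k \<Longrightarrow> gadd M k x (gadd M k x y) = y"
  using add_assoc[of x k x y] by simp

lemma add_eq_zero_iff:
  assumes "x \<in> cmp M k" "y \<in> cmp M k"
  shows "gadd M k x y = gzero M k \<longleftrightarrow> x = y"
  using assms add_self_left[of y k x] add_commute[of x k y] by auto

lemma add_left_commute:
  "x \<in> cmp M k \<Longrightarrow> y \<in> cmp M k \<Longrightarrow> z \<in> cmp M k \<Longrightarrow>
   gadd M k x (gadd M k y z) = gadd M k y (gadd M k x z)"
  by (metis add_assoc add_commute)

lemma add_add_swap:
  "x \<in> cmp M k \<Longrightarrow> y \<in> cmp M k \<Longrightarrow> u \<in> cmp M k \<Longrightarrow> v \<in> cmp M k \<Longrightarrow>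
   gadd M k (gadd M k x y) (gadd M k u v) = gadd M k (gadd M k x u) (gadd M k y v)"
  by (simp add: add_assoc add_left_commute[of y k u])

definition deg_terms :: "int \<Rightarrow> (int \<times> 'a \<times> rpoly) list \<Rightarrow> bool" where
  "deg_terms k xs \<longleftrightarrow> (\<forall>(j, b, r)\<in>set xs. b \<in> cmp M j \<and> r \<in> Rh V w (k - j))"

lemma deg_terms_simps [simp]:
  "deg_terms k []"
  "deg_terms k ((j, b, r) # xs) \<longleftrightarrow> b \<in> cmp M j \<and> r \<in> Rh V w (k - j) \<and> deg_terms k xs"
  "deg_terms k (xs @ ys) \<longleftrightarrow> deg_terms k xs \<and> deg_terms k ys"
  by (simp_all add: deg_terms_def ball_Un)

lemma term_closed: "b \<in> cmp M j \<Longrightarrow> r \<in> Rh V w (k - j) \<Longrightarrow> gact M (k - j) r j b \<in> cmp M k"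
  using act_closed[of r "k - j" b j] by simp

lemma lincomb_closed: "deg_terms k xs \<Longrightarrow> lincomb M k xs \<in> cmp M k"
  by (induction xs) (auto simp: term_closed)

lemma lincomb_append:
  "deg_terms k xs \<Longrightarrow> deg_terms k ys \<Longrightarrow>
   lincomb M k (xs @ ys) = gadd M k (lincomb M k xs) (lincomb M k ys)"
  by (induction xs) (auto simp: lincomb_closed term_closed add_assoc)

lemma lincomb_middle:
  "deg_terms k (xs @ (j, b, r) # ys) \<Longrightarrow>
   lincomb M k (xs @ (j, b, r) # ys) = gadd M k (gact M (k - j) r j b) (lincomb M k (xs @ ys))"
  by (induction xs) (auto simp: lincomb_closed term_closed add_left_commute)

lemma lincomb_act:
  assumes r: "r \<in> Rh V w i"
  shows "deg_terms k xs \<Longrightarrow>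
    gact M i r k (lincomb M k xs) = lincomb M (i + k) (map (\<lambda>(j, b, s). (j, b, r * s)) xs)"
proof (induction xs)
  case (Cons x xs)
  obtain j b s where x: "x = (j, b, s)" by (cases x)
  with Cons.prems have b: "b \<in> cmp M j" "s \<in> Rh V w (k - j)" and xs: "deg_terms k xs"
    by auto
  have "gact M i r k (gact M (k - j) s j b) = gact M (i + k - j) (r * s) j b"
    using act_mult[OF r b(2) b(1)] by (simp add: add_diff_eq)
  then show ?case
    using Cons.IH[OF xs] act_add[OF r term_closed[OF b] lincomb_closed[OF xs]] x by simp
qed (simp add: r)

lemma lincomb_zero_coeffs: "\<forall>(j, b, r)\<in>set xs. b \<in> cmp M j \<and> r = 0 \<Longrightarrow> lincomb M k xs = gzero M k"
  by (induction xs) auto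

end

lemma ghom_closed: "ghom V w M N e f \<Longrightarrow> x \<in> cmp M k \<Longrightarrow> f k x \<in> cmp N (k + e)"
  and ghom_add: "ghom V w M N e f \<Longrightarrow> x \<in> cmp M k \<Longrightarrow> y \<in> cmp M k \<Longrightarrow>
     f k (gadd M k x y) = gadd N (k + e) (f k x) (f k y)"
  and ghom_act: "ghom V w M N e f \<Longrightarrow> r \<in> Rh V w i \<Longrightarrow> x \<in> cmp M k \<Longrightarrow>
     f (i + k) (gact M i r k x) = gact N i r (k + e) (f k x)"
  unfolding ghom_def by blast+

lemma ghom_comp:
  assumes f: "ghom V w M N e f" and g: "ghom V w N P e' g"
  shows "ghom V w M P (e + e') (\<lambda>k x. g (k + e) (f k x))"
  unfolding ghom_def
proof (intro conjI allI impI)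
  fix i r k x assume "r \<in> Rh V w i \<and> x \<in> cmp M k"
  then show "g (i + k + e) (f (i + k) (gact M i r k x)) = gact P i r (k + (e + e')) (g (k + e) (f k x))"
    using ghom_act[OF f] ghom_act[OF g] ghom_closed[OF f] by (simp add: add.assoc)
next
  fix k x assume "x \<in> cmp M k"
  then show "g (k + e) (f k x) \<in> cmp P (k + (e + e'))"
    using ghom_closed[OF g ghom_closed[OF f]] by (simp add: add.assoc)
qed (simp add: ghom_closed[OF f] ghom_add[OF f] ghom_add[OF g] add.assoc)

lemma ghom_restrict_domain:
  "ghom V w M N e f \<Longrightarrow> (\<And>k. c k \<subseteq> cmp M k) \<Longrightarrow> ghom V w (M\<lparr>cmp := c\<rparr>) N e f"
  unfolding ghom_def by simp blast

lemma ghom_extend_codomain: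
  "ghom V w M (N\<lparr>cmp := c\<rparr>) e f \<Longrightarrow> (\<And>k. c k \<subseteq> cmp N k) \<Longrightarrow> ghom V w M N e f"
  unfolding ghom_def by simp blast

context graded_module
begin

lemma ghom_id: "ghom V w M M 0 (\<lambda>k x. x)"
  by (simp add: ghom_def act_closed)

lemma ghom_pointwise_add:
  assumes f: "ghom V w P M e f" and g: "ghom V w P M e g"
  shows "ghom V w P M e (\<lambda>k x. gadd M (k + e) (f k x) (g k x))"
  unfolding ghom_def
proof (intro conjI allI impI)
  fix k x y assume "x \<in> cmp P k \<and> y \<in> cmp P k"
  then show "gadd M (k + e) (f k (gadd P k x y)) (g k (gadd P k x y)) =
      gadd M (k + e) (gadd M (k + e) (f k x) (g k x)) (gadd M (k + e) (f k y) (g k y))"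
    by (simp add: ghom_add[OF f] ghom_add[OF g] ghom_closed[OF f] ghom_closed[OF g] add_add_swap)
next
  fix i r k x assume "r \<in> Rh V w i \<and> x \<in> cmp P k"
  then show "gadd M (i + k + e) (f (i + k) (gact P i r k x)) (g (i + k) (gact P i r k x)) =
      gact M i r (k + e) (gadd M (k + e) (f k x) (g k x))"
    by (simp add: ghom_act[OF f] ghom_act[OF g] ghom_closed[OF f] ghom_closed[OF g] act_add add.assoc)
qed (simp add: ghom_closed[OF f] ghom_closed[OF g])

lemma submodule_gmodule:
  assumes sub: "\<And>k. c k \<subseteq> cmp M k" and zero: "\<And>k. gzero M k \<in> c k"
    and add: "\<And>k x y. x \<in> c k \<Longrightarrow> y \<in> c k \<Longrightarrow> gadd M k x y \<in> c k"
    and act: "\<And>i r k x. r \<in> Rh V w i \<Longrightarrow> x \<in> c k \<Longrightarrow> gact M i r k x \<in> c (i + k)"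
  shows "gmodule V w (M\<lparr>cmp := c\<rparr>)"
proof -
  have in_M: "x \<in> c k \<Longrightarrow> x \<in> cmp M k" for x k
    using sub by blast
  show ?thesis
  proof (unfold gmodule_def, simp, intro conjI allI ballI impI)
    fix k x assume "x \<in> c k"
    then show "\<exists>y\<in>c k. gadd M k x y = gzero M k"
      using in_M by (intro bexI[of _ x]) simp_all
  qed (auto simp: zero add act in_M add_assoc act_add_scalar act_add act_mult intro: add_commute)
qed

end

locale graded_module_pair = M: graded_module V w M + N: graded_module V w N
  for V :: "nat set" and w :: "nat \<Rightarrow> int" and M :: "'a gmod" and N :: "'b gmod"
begin

lemma ghom_zero:
  assumes f: "ghom V w M N e f" shows "f k (gzero M k) = gzero N (k + e)"
  using N.idem_zero[OF ghom_closed[OF f M.zero_closed]] ghom_add[OF f M.zero_closed M.zero_closed]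
  by simp

lemma ghom_lincomb:
  assumes f: "ghom V w M N e f"
  shows "M.deg_terms k xs \<Longrightarrow>
    f k (lincomb M k xs) = lincomb N (k + e) (map (\<lambda>(j, b, r). (j + e, f j b, r)) xs)"
proof (induction xs)
  case (Cons x xs)
  obtain j b r where x: "x = (j, b, r)" by (cases x)
  with Cons.prems have b: "b \<in> cmp M j" "r \<in> Rh V w (k - j)" and xs: "M.deg_terms k xs"
    by auto
  have "f k (gact M (k - j) r j b) = gact N (k + e - (j + e)) r (j + e) (f j b)"
    using ghom_act[OF f b(2) b(1)] by simp
  then show ?case
    using Cons.IH[OF xs] ghom_add[OF f M.term_closed[OF b] M.lincomb_closed[OF xs]] x by simp
qed (simp add: ghom_zero[OF f])

end

lemma not_distinct_map_decomp:
  assumes "\<not> distinct (map f xs)"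
  obtains xs1 x xs2 y xs3 where "xs = xs1 @ x # xs2 @ y # xs3" "f x = f y"
proof -
  obtain as z bs cs where "map f xs = as @ z # bs @ z # cs"
    using not_distinct_decomp[OF assms] by auto
  then obtain xs1 ys where "xs = xs1 @ ys" "map f ys = z # bs @ z # cs"
    by (auto simp: map_eq_append_conv)
  moreover from this(2) obtain x ys' where "ys = x # ys'" "f x = z" "map f ys' = bs @ z # cs"
    by (auto simp: map_eq_Cons_conv)
  moreover from this(3) obtain xs2 zs where "ys' = xs2 @ zs" "map f zs = z # cs"
    by (auto simp: map_eq_append_conv)
  moreover from this(2) obtain y xs3 where "zs = y # xs3" "f y = z"
    by (auto simp: map_eq_Cons_conv)
  ultimately show ?thesis
    using that by simp
qed

definition basis_terms :: "nat set \<Rightarrow> (nat \<Rightarrow> int) \<Rightarrow> (int \<Rightarrow> 'a set) \<Rightarrow> int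
    \<Rightarrow> (int \<times> 'a \<times> rpoly) list \<Rightarrow> bool" where
  "basis_terms V w bas k xs \<longleftrightarrow> (\<forall>(j, b, r)\<in>set xs. b \<in> bas j \<and> r \<in> Rh V w (k - j))"

definition gbasis :: "nat set \<Rightarrow> (nat \<Rightarrow> int) \<Rightarrow> 'a gmod \<Rightarrow> (int \<Rightarrow> 'a set) \<Rightarrow> bool" where
  "gbasis V w M bas \<longleftrightarrow>
     (\<forall>j. bas j \<subseteq> cmp M j) \<and>
     (\<forall>k x. x \<in> cmp M k \<longrightarrow> (\<exists>xs. basis_terms V w bas k xs \<and> x = lincomb M k xs)) \<and>
     (\<forall>k xs. basis_terms V w bas k xs \<and> distinct (map (\<lambda>(j, b, r). (j, b)) xs) \<and>
        lincomb M k xs = gzero M k \<longrightarrow> (\<forall>(j, b, r)\<in>set xs. r = 0))"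

lemma gfree_iff_gbasis: "gfree V w M \<longleftrightarrow> (\<exists>bas. gbasis V w M bas)"
  by (simp add: gfree_def gbasis_def basis_terms_def)

lemma gbasis_subset: "gbasis V w M bas \<Longrightarrow> b \<in> bas j \<Longrightarrow> b \<in> cmp M j"
  unfolding gbasis_def by blast

lemma gbasis_spans:
  assumes "gbasis V w M bas" and "x \<in> cmp M k"
  obtains xs where "basis_terms V w bas k xs" "x = lincomb M k xs"
  using assms unfolding gbasis_def by blast

lemma basis_terms_simps [simp]:
  "basis_terms V w bas k []"
  "basis_terms V w bas k ((j, b, r) # xs) \<longleftrightarrow>
     b \<in> bas j \<and> r \<in> Rh V w (k - j) \<and> basis_terms V w bas k xs"
  "basis_terms V w bas k (xs @ ys) \<longleftrightarrow> basis_terms V w bas k xs \<and> basis_terms V w bas k ys"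
  by (simp_all add: basis_terms_def ball_Un)

locale basis_extension = graded_module_pair V w M N
  for V :: "nat set" and w :: "nat \<Rightarrow> int" and M :: "'a gmod" and N :: "'b gmod" +
  fixes bas :: "int \<Rightarrow> 'a set" and e :: int and g :: "int \<Rightarrow> 'a \<Rightarrow> 'b"
  assumes basis: "gbasis V w M bas"
    and g_closed: "b \<in> bas j \<Longrightarrow> g j b \<in> cmp N (j + e)"
begin

abbreviation bterms :: "int \<Rightarrow> (int \<times> 'a \<times> rpoly) list \<Rightarrow> bool" where
  "bterms \<equiv> basis_terms V w bas"

definition image_terms :: "(int \<times> 'a \<times> rpoly) list \<Rightarrow> (int \<times> 'b \<times> rpoly) list" where
  "image_terms xs = map (\<lambda>(j, b, r). (j + e, g j b, r)) xs"

lemma image_terms_simps [simp]: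
  "image_terms [] = []"
  "image_terms ((j, b, r) # xs) = (j + e, g j b, r) # image_terms xs"
  "image_terms (xs @ ys) = image_terms xs @ image_terms ys"
  by (simp_all add: image_terms_def)

lemma basis_in_cmp: "b \<in> bas j \<Longrightarrow> b \<in> cmp M j"
  using gbasis_subset[OF basis] .

lemma bterms_deg_terms: "bterms k xs \<Longrightarrow> M.deg_terms k xs"
  by (induction xs) (auto simp: basis_in_cmp)

lemma bterms_image_deg_terms: "bterms k xs \<Longrightarrow> N.deg_terms (k + e) (image_terms xs)"
  by (induction xs) (auto simp: g_closed)

text \<open>Independence in gbasis only speaks about distinct basis elements; merging two terms
  with the same basis element reduces an arbitrary relation to that case.\<close>

lemma merge_duplicate_terms:
  assumes xs: "bterms k xs" and dup: "\<not> distinct (map (\<lambda>(j, b, r). (j, b)) xs)"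
  obtains ys where "bterms k ys" "length ys < length xs"
    "lincomb M k ys = lincomb M k xs"
    "lincomb N (k + e) (image_terms ys) = lincomb N (k + e) (image_terms xs)"
proof -
  obtain xs1 p xs2 q xs3 where pq: "xs = xs1 @ p # xs2 @ q # xs3"
    and same: "(\<lambda>(j, b, r). (j, b)) p = (\<lambda>(j, b, r). (j, b)) q"
    using not_distinct_map_decomp[OF dup] .
  obtain j b r1 r2 where "p = (j, b, r1)" "q = (j, b, r2)"
    using same by (cases p; cases q) auto
  with pq have split: "xs = xs1 @ (j, b, r1) # xs2 @ (j, b, r2) # xs3"
    by simp
  define ys where "ys = (j, b, r1 + r2) # xs1 @ xs2 @ xs3"
  have b: "b \<in> bas j" "r1 \<in> Rh V w (k - j)" "r2 \<in> Rh V w (k - j)"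
    and rest: "bterms k (xs1 @ xs2 @ xs3)"
    using xs by (auto simp: split)
  have ys: "bterms k ys"
    using b rest by (simp add: ys_def Rh_add)
  have eq_M: "lincomb M k ys = lincomb M k xs"
    using xs b rest bterms_deg_terms[OF rest] bterms_deg_terms[OF xs] basis_in_cmp[OF b(1)]
    by (simp add: split ys_def M.lincomb_middle[where xs = xs1] M.lincomb_middle[where xs = "xs1 @ xs2", simplified]
        M.act_add_scalar M.term_closed M.lincomb_closed M.add_assoc)
  have "gact N (k - j) r (j + e) (g j b) \<in> cmp N (k + e)" if "r \<in> Rh V w (k - j)" for r
    using N.act_closed[OF that g_closed[OF b(1)]] by simp
  then have eq_N: "lincomb N (k + e) (image_terms ys) = lincomb N (k + e) (image_terms xs)"
    using xs b rest bterms_image_deg_terms[OF rest] bterms_image_deg_terms[OF xs] g_closed[OF b(1)]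
    by (simp add: split ys_def N.lincomb_middle[where xs = "image_terms xs1"]
        N.lincomb_middle[where xs = "image_terms xs1 @ image_terms xs2", simplified]
        N.act_add_scalar N.term_closed N.lincomb_closed N.add_assoc)
  show ?thesis
    using that[OF ys _ eq_M eq_N] by (simp add: split ys_def)
qed

lemma image_lincomb_zero:
  "bterms k xs \<Longrightarrow> lincomb M k xs = gzero M k \<Longrightarrow>
   lincomb N (k + e) (image_terms xs) = gzero N (k + e)"
proof (induction "length xs" arbitrary: xs rule: less_induct)
  case less
  show ?case
  proof (cases "distinct (map (\<lambda>(j, b, r). (j, b)) xs)")
    case True
    then have "\<forall>(j, b, r)\<in>set xs. r = 0"
      using basis less.prems unfolding gbasis_def by blast
    then have "\<forall>(j, b, r)\<in>set (image_terms xs). b \<in> cmp N j \<and> r = 0"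
      using less.prems(1) g_closed unfolding image_terms_def basis_terms_def by fastforce
    then show ?thesis
      by (rule N.lincomb_zero_coeffs)
  next
    case False
    then obtain ys where "bterms k ys" "length ys < length xs"
      "lincomb M k ys = lincomb M k xs"
      "lincomb N (k + e) (image_terms ys) = lincomb N (k + e) (image_terms xs)"
      using merge_duplicate_terms[OF less.prems(1)] by blast
    then show ?thesis
      using less by metis
  qed
qed

lemma image_lincomb_eq:
  assumes xs: "bterms k xs" and ys: "bterms k ys" and eq: "lincomb M k xs = lincomb M k ys"
  shows "lincomb N (k + e) (image_terms xs) = lincomb N (k + e) (image_terms ys)"
proof -
  have "lincomb M k (xs @ ys) = gzero M k"
    using eq M.lincomb_append[OF bterms_deg_terms[OF xs] bterms_deg_terms[OF ys]]
      M.lincomb_closed[OF bterms_deg_terms[OF ys]] by simp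
  then have "lincomb N (k + e) (image_terms (xs @ ys)) = gzero N (k + e)"
    using xs ys by (intro image_lincomb_zero) simp_all
  then show ?thesis
    using N.lincomb_append[OF bterms_image_deg_terms[OF xs] bterms_image_deg_terms[OF ys]]
      N.add_eq_zero_iff N.lincomb_closed bterms_image_deg_terms xs ys by simp
qed

definition extension :: "int \<Rightarrow> 'a \<Rightarrow> 'b" where
  "extension k x = lincomb N (k + e) (image_terms (SOME xs. bterms k xs \<and> x = lincomb M k xs))"

lemma extension_lincomb:
  assumes xs: "bterms k xs"
  shows "extension k (lincomb M k xs) = lincomb N (k + e) (image_terms xs)"
proof -
  let ?ys = "SOME ys. bterms k ys \<and> lincomb M k xs = lincomb M k ys"
  have "\<exists>ys. bterms k ys \<and> lincomb M k xs = lincomb M k ys"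
    using xs by blast
  then have "bterms k ?ys" "lincomb M k ?ys = lincomb M k xs"
    by (metis (mono_tags, lifting) someI_ex)+
  then show ?thesis
    unfolding extension_def using image_lincomb_eq[OF _ xs] by simp
qed

lemma ghom_extension: "ghom V w M N e extension"
  unfolding ghom_def
proof (intro conjI allI impI)
  fix k x assume "x \<in> cmp M k"
  then obtain xs where "bterms k xs" "x = lincomb M k xs"
    by (rule gbasis_spans[OF basis])
  then show "extension k x \<in> cmp N (k + e)"
    by (simp add: extension_lincomb N.lincomb_closed bterms_image_deg_terms)
next
  fix k x y assume "x \<in> cmp M k \<and> y \<in> cmp M k"
  then obtain xs ys where xs: "bterms k xs" "x = lincomb M k xs" and ys: "bterms k ys" "y = lincomb M k ys"
    by (meson gbasis_spans[OF basis])
  then show "extension k (gadd M k x y) = gadd N (k + e) (extension k x) (extension k y)"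
    using extension_lincomb[of k "xs @ ys"]
    by (simp add: extension_lincomb M.lincomb_append N.lincomb_append bterms_deg_terms bterms_image_deg_terms)
next
  fix i r k x assume "r \<in> Rh V w i \<and> x \<in> cmp M k"
  then obtain xs where r: "r \<in> Rh V w i" and xs: "bterms k xs" "x = lincomb M k xs"
    by (meson gbasis_spans[OF basis])
  let ?rxs = "map (\<lambda>(j, b, s). (j, b, r * s)) xs"
  have rxs: "bterms (i + k) ?rxs"
    using xs(1) r by (induction xs) (auto simp: Rh_mult[OF r, of _ "k - _", simplified add_diff_eq])
  have "image_terms ?rxs = map (\<lambda>(j, b, s). (j, b, r * s)) (image_terms xs)"
    by (induction xs) auto
  then show "extension (i + k) (gact M i r k x) = gact N i r (k + e) (extension k x)"
    using xs r rxs extension_lincomb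
    by (simp add: M.lincomb_act N.lincomb_act bterms_deg_terms bterms_image_deg_terms add.assoc)
qed

lemma extension_basis: "b \<in> bas j \<Longrightarrow> extension j b = g j b"
  using extension_lincomb[of j "[(j, b, 1)]"] basis_in_cmp g_closed by simp

end

lemma (in graded_module_pair) ghom_extend_basis:
  assumes "gbasis V w M bas" and "\<And>j b. b \<in> bas j \<Longrightarrow> g j b \<in> cmp N (j + e)"
  obtains f where "ghom V w M N e f" "\<And>j b. b \<in> bas j \<Longrightarrow> f j b = g j b"
proof -
  interpret basis_extension V w M N bas e g
    using assms by unfold_locales
  show ?thesis
    using that ghom_extension extension_basis by blast
qed

lemma (in graded_module_pair) ghom_eq_on_basis:
  assumes basis: "gbasis V w M bas" and f: "ghom V w M N e f" and g: "ghom V w M N e g"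
    and eq: "\<And>j b. b \<in> bas j \<Longrightarrow> f j b = g j b" and x: "x \<in> cmp M k"
  shows "f k x = g k x"
proof -
  obtain xs where xs: "basis_terms V w bas k xs" "x = lincomb M k xs"
    using basis x by (rule gbasis_spans)
  have deg: "M.deg_terms k xs"
    using xs(1) basis unfolding gbasis_def basis_terms_def M.deg_terms_def by fast
  have "map (\<lambda>(j, b, r). (j + e, f j b, r)) xs = map (\<lambda>(j, b, r). (j + e, g j b, r)) xs"
    using xs(1) eq unfolding basis_terms_def by (auto split: prod.splits)
  then show ?thesis
    using ghom_lincomb[OF f deg] ghom_lincomb[OF g deg] xs(2) by metis
qed

locale dg_module = graded_module V w M
  for V :: "nat set" and w :: "nat \<Rightarrow> int" and M :: "'a gmod" +
  fixes d :: "int \<Rightarrow> 'a \<Rightarrow> 'a"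
  assumes dgmodule: "dgmodule V w M d"

lemma dg_moduleI: "dgmodule V w M d \<Longrightarrow> dg_module V w M d"
  by (simp add: dg_module_def dg_module_axioms_def graded_module_def dgmodule_def)

context dg_module
begin

abbreviation H :: "'a set gmod" where
  "H \<equiv> homology M d"

lemma ghom_d: "ghom V w M M (-1) d"
  using dgmodule by (simp add: dgmodule_def)

lemma d_closed [simp]: "x \<in> cmp M k \<Longrightarrow> d k x \<in> cmp M (k - 1)"
  using ghom_closed[OF ghom_d] by simp

lemma d_add: "x \<in> cmp M k \<Longrightarrow> y \<in> cmp M k \<Longrightarrow> d k (gadd M k x y) = gadd M (k - 1) (d k x) (d k y)"
  using ghom_add[OF ghom_d] by simp

lemma d_act: "r \<in> Rh V w i \<Longrightarrow> x \<in> cmp M k \<Longrightarrow> d (i + k) (gact M i r k x) = gact M i r (k - 1) (d k x)"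
  using ghom_act[OF ghom_d] by simp

lemma d_d: "x \<in> cmp M k \<Longrightarrow> d (k - 1) (d k x) = gzero M (k - 2)"
  using dgmodule by (simp add: dgmodule_def)

lemma d_zero [simp]: "d k (gzero M k) = gzero M (k - 1)"
proof -
  interpret graded_module_pair V w M M ..
  show ?thesis
    using ghom_zero[OF ghom_d] by simp
qed

lemma zcyc_iff: "z \<in> zcyc M d k \<longleftrightarrow> z \<in> cmp M k \<and> d k z = gzero M (k - 1)"
  by (simp add: zcyc_def)

lemma bdry_iff: "b \<in> bdry M d k \<longleftrightarrow> (\<exists>y\<in>cmp M (k + 1). b = d (k + 1) y)"
  by (auto simp: bdry_def)

lemma bdry_zcyc: "b \<in> bdry M d k \<Longrightarrow> b \<in> zcyc M d k"
  using d_d[of _ "k + 1"] d_closed[of _ "k + 1"] by (auto simp: bdry_iff zcyc_iff)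

lemma bdry_cmp: "b \<in> bdry M d k \<Longrightarrow> b \<in> cmp M k"
  using bdry_zcyc zcyc_iff by blast

lemma zcyc_zero [simp]: "gzero M k \<in> zcyc M d k"
  by (simp add: zcyc_iff)

lemma zcyc_add: "z \<in> zcyc M d k \<Longrightarrow> z' \<in> zcyc M d k \<Longrightarrow> gadd M k z z' \<in> zcyc M d k"
  by (simp add: zcyc_iff d_add)

lemma zcyc_act: "r \<in> Rh V w i \<Longrightarrow> z \<in> zcyc M d k \<Longrightarrow> gact M i r k z \<in> zcyc M d (i + k)"
  using d_act[of r i z k] by (auto simp: zcyc_iff act_closed add_diff_eq)

lemma bdry_zero [simp]: "gzero M k \<in> bdry M d k"
  unfolding bdry_iff using d_zero[of "k + 1"] by (intro bexI[of _ "gzero M (k + 1)"]) simp_all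

lemma bdry_add:
  assumes "b \<in> bdry M d k" "b' \<in> bdry M d k"
  shows "gadd M k b b' \<in> bdry M d k"
proof -
  obtain y y' where y: "y \<in> cmp M (k + 1)" "b = d (k + 1) y"
    and y': "y' \<in> cmp M (k + 1)" "b' = d (k + 1) y'"
    using assms by (auto simp: bdry_iff)
  then have "gadd M k b b' = d (k + 1) (gadd M (k + 1) y y')"
    using d_add[OF y(1) y'(1)] by simp
  then show ?thesis
    unfolding bdry_iff using y y' by (intro bexI[of _ "gadd M (k + 1) y y'"]) simp_all
qed

lemma bdry_act:
  assumes r: "r \<in> Rh V w i" and "b \<in> bdry M d k"
  shows "gact M i r k b \<in> bdry M d (i + k)"
proof -
  obtain y where y: "y \<in> cmp M (k + 1)" "b = d (k + 1) y"
    using assms(2) by (auto simp: bdry_iff)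
  then have "gact M i r k b = d (i + k + 1) (gact M i r (k + 1) y)"
    using d_act[OF r y(1)] by (simp add: add.assoc)
  moreover have "gact M i r (k + 1) y \<in> cmp M (i + k + 1)"
    using act_closed[OF r y(1)] by (simp add: add.assoc)
  ultimately show ?thesis
    unfolding bdry_iff by (intro bexI[of _ "gact M i r (k + 1) y"])
qed

lemma hcls_iff: "x \<in> hcls M d k z \<longleftrightarrow> (\<exists>b\<in>bdry M d k. x = gadd M k z b)"
  by (auto simp: hcls_def)

lemma hcls_self: "z \<in> cmp M k \<Longrightarrow> z \<in> hcls M d k z"
  by (metis hcls_iff bdry_zero add_zero_right)

lemma hcls_add_bdry:
  assumes z: "z \<in> cmp M k" and b: "b \<in> bdry M d k"
  shows "hcls M d k (gadd M k z b) = hcls M d k z"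
proof (intro set_eqI iffI)
  fix x assume "x \<in> hcls M d k (gadd M k z b)"
  then obtain b' where "b' \<in> bdry M d k" "x = gadd M k (gadd M k z b) b'"
    by (auto simp: hcls_iff)
  then show "x \<in> hcls M d k z"
    using b z bdry_add bdry_cmp by (auto simp: hcls_iff add_assoc)
next
  fix x assume "x \<in> hcls M d k z"
  then obtain b' where b': "b' \<in> bdry M d k" "x = gadd M k z b'"
    by (auto simp: hcls_iff)
  then have "x = gadd M k (gadd M k z b) (gadd M k b b')"
    using b z bdry_cmp by (simp add: add_assoc add_self_left)
  then show "x \<in> hcls M d k (gadd M k z b)"
    using b b' bdry_add by (auto simp: hcls_iff)
qed

lemma hcls_eq_iff:
  assumes "z \<in> cmp M k" "z' \<in> cmp M k"
  shows "hcls M d k z = hcls M d k z' \<longleftrightarrow> gadd M k z z' \<in> bdry M d k"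
proof
  assume "hcls M d k z = hcls M d k z'"
  then obtain b where "b \<in> bdry M d k" "z = gadd M k z' b"
    using hcls_self[OF assms(1)] by (auto simp: hcls_iff)
  then show "gadd M k z z' \<in> bdry M d k"
    using assms bdry_cmp by (simp add: add_commute[of z'] add_assoc add_self_left)
next
  assume "gadd M k z z' \<in> bdry M d k"
  then show "hcls M d k z = hcls M d k z'"
    using hcls_add_bdry[OF assms(2)] assms
    by (metis add_commute add_self_left)
qed

lemma some_in_hcls:
  assumes "z \<in> cmp M k"
  obtains b where "b \<in> bdry M d k" "(SOME x. x \<in> hcls M d k z) = gadd M k z b"
  using someI[of "\<lambda>x. x \<in> hcls M d k z", OF hcls_self[OF assms]] by (auto simp: hcls_iff)

lemma homology_cmp: "cmp H k = hcls M d k ` zcyc M d k"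
  by (simp add: homology_def)

lemma homology_zero: "gzero H k = hcls M d k (gzero M k)"
  by (simp add: homology_def)

lemma homology_add:
  assumes z: "z \<in> cmp M k" and z': "z' \<in> cmp M k"
  shows "gadd H k (hcls M d k z) (hcls M d k z') = hcls M d k (gadd M k z z')"
proof -
  obtain b b' where b: "b \<in> bdry M d k" "(SOME x. x \<in> hcls M d k z) = gadd M k z b"
    and b': "b' \<in> bdry M d k" "(SOME x. x \<in> hcls M d k z') = gadd M k z' b'"
    using some_in_hcls z z' by metis
  have "gadd M k (gadd M k z b) (gadd M k z' b') = gadd M k (gadd M k z z') (gadd M k b b')"
    using z z' b b' bdry_cmp by (simp add: add_add_swap)
  then show ?thesis
    using b b' z z' by (simp add: homology_def hcls_add_bdry bdry_add)
qed

lemma homology_act: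
  assumes r: "r \<in> Rh V w i" and z: "z \<in> cmp M k"
  shows "gact H i r k (hcls M d k z) = hcls M d (i + k) (gact M i r k z)"
proof -
  obtain b where b: "b \<in> bdry M d k" "(SOME x. x \<in> hcls M d k z) = gadd M k z b"
    using some_in_hcls z by metis
  then show ?thesis
    using r z bdry_cmp[OF b(1)]
    by (simp add: homology_def act_add act_closed hcls_add_bdry bdry_act)
qed

lemma homology_gmodule: "gmodule V w H"
  unfolding gmodule_def
proof (intro conjI allI ballI impI)
  fix k X Y assume "X \<in> cmp H k" "Y \<in> cmp H k"
  then obtain x y where xy: "x \<in> zcyc M d k" "y \<in> zcyc M d k" "X = hcls M d k x" "Y = hcls M d k y"
    by (auto simp: homology_cmp)
  then have "x \<in> cmp M k" "y \<in> cmp M k"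
    by (simp_all add: zcyc_iff)
  with xy show "gadd H k X Y \<in> cmp H k" "gadd H k X Y = gadd H k Y X"
    by (simp_all add: homology_cmp homology_add zcyc_add add_commute)
next
  fix k X Y U assume "X \<in> cmp H k" "Y \<in> cmp H k" "U \<in> cmp H k"
  then show "gadd H k (gadd H k X Y) U = gadd H k X (gadd H k Y U)"
    by (auto simp: homology_cmp homology_add zcyc_iff add_assoc)
next
  fix k X assume "X \<in> cmp H k"
  then obtain x where x: "x \<in> zcyc M d k" "X = hcls M d k x"
    by (auto simp: homology_cmp)
  then have "x \<in> cmp M k"
    by (simp add: zcyc_iff)
  with x show "gadd H k (gzero H k) X = X" "gact H 0 1 k X = X"
    by (simp_all add: homology_zero homology_add homology_act)
  from x \<open>x \<in> cmp M k\<close> show "\<exists>Y\<in>cmp H k. gadd H k X Y = gzero H k"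
    using \<open>X \<in> cmp H k\<close> by (intro bexI[of _ X]) (simp_all add: homology_zero homology_add)
next
  fix i j r s k X
  assume "r \<in> Rh V w i \<and> s \<in> Rh V w j \<and> X \<in> cmp H k"
  then show "gact H (i + j) (r * s) k X = gact H i r (j + k) (gact H j s k X)"
    by (auto simp: homology_cmp homology_act zcyc_iff act_closed act_mult Rh_mult add.assoc)
next
  fix i r s k X
  assume "r \<in> Rh V w i \<and> s \<in> Rh V w i \<and> X \<in> cmp H k"
  then show "gact H i (r + s) k X = gadd H (i + k) (gact H i r k X) (gact H i s k X)"
    by (auto simp: homology_cmp homology_act homology_add zcyc_iff act_closed act_add_scalar Rh_add)
next
  fix i r k X Y
  assume "r \<in> Rh V w i \<and> X \<in> cmp H k \<and> Y \<in> cmp H k"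
  then show "gact H i r k (gadd H k X Y) = gadd H (i + k) (gact H i r k X) (gact H i r k Y)"
    by (auto simp: homology_cmp homology_act homology_add zcyc_iff act_closed act_add)
next
  fix i r k X
  assume "r \<in> Rh V w i \<and> X \<in> cmp H k"
  then show "gact H i r k X \<in> cmp H (i + k)"
    by (auto simp: homology_cmp homology_act zcyc_iff intro!: imageI zcyc_act[unfolded zcyc_iff])
qed (auto simp: homology_cmp homology_zero)

lemma homology_repr:
  assumes "X \<in> cmp H k"
  shows "(SOME x. x \<in> X) \<in> zcyc M d k" "hcls M d k (SOME x. x \<in> X) = X"
proof -
  obtain z where z: "z \<in> zcyc M d k" and X: "X = hcls M d k z"
    using assms by (auto simp: homology_cmp)
  then have "z \<in> cmp M k"
    by (simp add: zcyc_iff)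
  then obtain b where b: "b \<in> bdry M d k" "(SOME x. x \<in> X) = gadd M k z b"
    unfolding X by (rule some_in_hcls)
  then show "(SOME x. x \<in> X) \<in> zcyc M d k" "hcls M d k (SOME x. x \<in> X) = X"
    using z \<open>z \<in> cmp M k\<close> by (simp_all add: X zcyc_add bdry_zcyc hcls_add_bdry)
qed

lemma homology_graded_module: "graded_module V w H"
  using homology_gmodule by (rule graded_module.intro)

lemma ghom_hcls:
  assumes f: "ghom V w P M e f" and cyc: "\<And>k x. x \<in> cmp P k \<Longrightarrow> f k x \<in> zcyc M d (k + e)"
  shows "ghom V w P H e (\<lambda>k x. hcls M d (k + e) (f k x))"
  unfolding ghom_def
proof (intro conjI allI impI)
  fix i r k x assume "r \<in> Rh V w i \<and> x \<in> cmp P k"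
  then show "hcls M d (i + k + e) (f (i + k) (gact P i r k x)) = gact H i r (k + e) (hcls M d (k + e) (f k x))"
    using ghom_act[OF f] ghom_closed[OF f] by (simp add: homology_act add.assoc)
qed (simp_all add: homology_cmp cyc ghom_add[OF f] ghom_closed[OF f] homology_add)

lemma cycles_gmodule: "gmodule V w (M\<lparr>cmp := zcyc M d\<rparr>)"
  by (rule submodule_gmodule) (auto simp: zcyc_iff zcyc_add[unfolded zcyc_iff] zcyc_act[unfolded zcyc_iff])

lemma homology_section:
  assumes "gfree V w H"
  obtains \<phi> where "ghom V w H M 0 \<phi>"
    "\<And>k X. X \<in> cmp H k \<Longrightarrow> \<phi> k X \<in> zcyc M d k"
    "\<And>k X. X \<in> cmp H k \<Longrightarrow> hcls M d k (\<phi> k X) = X"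
proof -
  obtain bas where bas: "gbasis V w H bas"
    using assms by (auto simp: gfree_iff_gbasis)
  interpret HZ: graded_module_pair V w H "M\<lparr>cmp := zcyc M d\<rparr>"
    by (intro graded_module_pair.intro homology_graded_module graded_module.intro cycles_gmodule)
  have "(SOME x. x \<in> X) \<in> zcyc M d j" if "X \<in> bas j" for j X
    using homology_repr(1)[OF gbasis_subset[OF bas that]] .
  then obtain \<phi> where \<phi>: "ghom V w H (M\<lparr>cmp := zcyc M d\<rparr>) 0 \<phi>"
    and \<phi>_bas: "\<And>j X. X \<in> bas j \<Longrightarrow> \<phi> j X = (SOME x. x \<in> X)"
    using HZ.ghom_extend_basis[OF bas, of "\<lambda>j X. SOME x. x \<in> X" 0] by auto
  have cyc: "\<phi> k X \<in> zcyc M d k" if "X \<in> cmp H k" for k X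
    using ghom_closed[OF \<phi> that] by simp
  have \<phi>_M: "ghom V w H M 0 \<phi>"
    using \<phi> by (rule ghom_extend_codomain) (auto simp: zcyc_iff)
  interpret HH: graded_module_pair V w H H
    by (intro graded_module_pair.intro homology_graded_module)
  have hcls_\<phi>: "ghom V w H H 0 (\<lambda>k X. hcls M d k (\<phi> k X))"
    using ghom_hcls[OF \<phi>_M] cyc by simp
  have "hcls M d j (\<phi> j X) = X" if "X \<in> bas j" for j X
    using homology_repr(2)[OF gbasis_subset[OF bas that]] by (simp add: \<phi>_bas that)
  then have "hcls M d k (\<phi> k X) = X" if "X \<in> cmp H k" for k X
    using HH.ghom_eq_on_basis[OF bas hcls_\<phi> graded_module.ghom_id[OF homology_graded_module] _ that] by blast
  with \<phi>_M cyc that show ?thesis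
    by blast
qed

lemma boundary_lift:
  assumes P: "graded_module V w P" and bas: "gbasis V w P bas"
    and f: "ghom V w P M e f" and bd: "\<And>k x. x \<in> cmp P k \<Longrightarrow> f k x \<in> bdry M d (k + e)"
  obtains L where "ghom V w P M (e + 1) L"
    "\<And>k x. x \<in> cmp P k \<Longrightarrow> d (k + e + 1) (L k x) = f k x"
proof -
  interpret PM: graded_module_pair V w P M
    using P by (intro graded_module_pair.intro graded_module_axioms)
  define g where "g j b = (SOME y. y \<in> cmp M (j + e + 1) \<and> d (j + e + 1) y = f j b)" for j b
  have g: "g j b \<in> cmp M (j + e + 1) \<and> d (j + e + 1) (g j b) = f j b" if "b \<in> bas j" for j b
  proof -
    have "b \<in> cmp P j"
      using gbasis_subset[OF bas that] .
    then have "\<exists>y. y \<in> cmp M (j + e + 1) \<and> d (j + e + 1) y = f j b"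
      using bd by (force simp: bdry_iff)
    then show ?thesis
      unfolding g_def by (rule someI_ex)
  qed
  then obtain L where L: "ghom V w P M (e + 1) L" and L_bas: "\<And>j b. b \<in> bas j \<Longrightarrow> L j b = g j b"
    using PM.ghom_extend_basis[OF bas, of g "e + 1"] by (auto simp: add.assoc)
  have "ghom V w P M e (\<lambda>k x. d (k + (e + 1)) (L k x))"
    using ghom_comp[OF L ghom_d] by simp
  then have "d (k + e + 1) (L k x) = f k x" if "x \<in> cmp P k" for k x
    using PM.ghom_eq_on_basis[OF bas _ f _ that] g L_bas by (simp add: add.assoc)
  with L that show ?thesis
    by blast
qed

end

locale dg_short_exact =
  fixes V :: "nat set" and w :: "nat \<Rightarrow> int"
    and A :: "'a gmod" and dA :: "int \<Rightarrow> 'a \<Rightarrow> 'a"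
    and B :: "'b gmod" and dB :: "int \<Rightarrow> 'b \<Rightarrow> 'b"
    and C :: "'c gmod" and dC :: "int \<Rightarrow> 'c \<Rightarrow> 'c"
    and \<alpha> :: "int \<Rightarrow> 'a \<Rightarrow> 'b" and \<beta> :: "int \<Rightarrow> 'b \<Rightarrow> 'c"
  assumes ses: "dg_ses V w A dA B dB C dC \<alpha> \<beta>"
begin

sublocale A: dg_module V w A dA
  using ses by (intro dg_moduleI) (simp add: dg_ses_def)

sublocale B: dg_module V w B dB
  using ses by (intro dg_moduleI) (simp add: dg_ses_def)

sublocale C: dg_module V w C dC
  using ses by (intro dg_moduleI) (simp add: dg_ses_def)

lemma ghom_\<alpha>: "ghom V w A B 0 \<alpha>"
  using ses by (simp add: dg_ses_def)

lemma ghom_\<beta>: "ghom V w B C 0 \<beta>"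
  using ses by (simp add: dg_ses_def)

lemma \<alpha>_chain: "x \<in> cmp A k \<Longrightarrow> dB k (\<alpha> k x) = \<alpha> (k - 1) (dA k x)"
  using ses by (simp add: dg_ses_def chain_map_def)

lemma \<beta>_chain: "y \<in> cmp B k \<Longrightarrow> dC k (\<beta> k y) = \<beta> (k - 1) (dB k y)"
  using ses by (simp add: dg_ses_def chain_map_def)

lemma \<alpha>_inj: "inj_on (\<alpha> k) (cmp A k)"
  using ses by (simp add: dg_ses_def)

lemma \<beta>_surj: "z \<in> cmp C k \<Longrightarrow> \<exists>y\<in>cmp B k. z = \<beta> k y"
  using ses unfolding dg_ses_def by blast

lemma exact:
  assumes "y \<in> cmp B k"
  shows "\<beta> k y = gzero C k \<longleftrightarrow> (\<exists>x\<in>cmp A k. y = \<alpha> k x)"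
proof -
  have "{y \<in> cmp B k. \<beta> k y = gzero C k} = \<alpha> k ` cmp A k"
    using ses by (simp add: dg_ses_def)
  then show ?thesis
    using assms by blast
qed

lemma \<alpha>_closed: "x \<in> cmp A k \<Longrightarrow> \<alpha> k x \<in> cmp B k"
  and \<alpha>_add: "x \<in> cmp A k \<Longrightarrow> x' \<in> cmp A k \<Longrightarrow> \<alpha> k (gadd A k x x') = gadd B k (\<alpha> k x) (\<alpha> k x')"
  and \<beta>_closed: "y \<in> cmp B k \<Longrightarrow> \<beta> k y \<in> cmp C k"
  and \<beta>_add: "y \<in> cmp B k \<Longrightarrow> y' \<in> cmp B k \<Longrightarrow> \<beta> k (gadd B k y y') = gadd C k (\<beta> k y) (\<beta> k y')"
  using ghom_closed[OF ghom_\<alpha>] ghom_add[OF ghom_\<alpha>] ghom_closed[OF ghom_\<beta>] ghom_add[OF ghom_\<beta>]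
  by simp_all

lemma \<beta>_\<alpha>: "x \<in> cmp A k \<Longrightarrow> \<beta> k (\<alpha> k x) = gzero C k"
  using exact \<alpha>_closed by blast

lemma \<alpha>_bdry:
  assumes "x \<in> bdry A dA k"
  shows "\<alpha> k x \<in> bdry B dB k"
proof -
  obtain y where y: "y \<in> cmp A (k + 1)" "x = dA (k + 1) y"
    using assms by (auto simp: A.bdry_iff)
  then have "\<alpha> k x = dB (k + 1) (\<alpha> (k + 1) y)"
    using \<alpha>_chain[OF y(1)] by simp
  then show ?thesis
    using \<alpha>_closed[OF y(1)] by (auto simp: B.bdry_iff)
qed

lemma \<alpha>_zcyc: "x \<in> zcyc A dA k \<Longrightarrow> \<alpha> k x \<in> zcyc B dB k"
proof -
  interpret AB: graded_module_pair V w A B ..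
  show "x \<in> zcyc A dA k \<Longrightarrow> \<alpha> k x \<in> zcyc B dB k"
    using \<alpha>_chain \<alpha>_closed AB.ghom_zero[OF ghom_\<alpha>] by (simp add: A.zcyc_iff B.zcyc_iff)
qed

lemma hmap_hcls:
  assumes z: "z \<in> cmp A k"
  shows "hmap B dB 0 \<alpha> k (hcls A dA k z) = hcls B dB k (\<alpha> k z)"
proof -
  obtain b where b: "b \<in> bdry A dA k" "(SOME x. x \<in> hcls A dA k z) = gadd A k z b"
    using A.some_in_hcls[OF z] .
  then show ?thesis
    using z A.bdry_cmp \<alpha>_bdry by (simp add: hmap_def \<alpha>_add \<alpha>_closed B.hcls_add_bdry)
qed

lemma connecting_lifts_homologous:
  assumes y: "y \<in> cmp B j" and y': "y' \<in> cmp B j"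
    and x: "x \<in> cmp A (j - 1)" and x': "x' \<in> cmp A (j - 1)"
    and dy: "dB j y = \<alpha> (j - 1) x" and dy': "dB j y' = \<alpha> (j - 1) x'"
    and hom: "gadd C j (\<beta> j y) (\<beta> j y') \<in> bdry C dC j"
  shows "gadd A (j - 1) x x' \<in> bdry A dA (j - 1)"
proof -
  obtain c where c: "c \<in> cmp C (j + 1)" and dc: "gadd C j (\<beta> j y) (\<beta> j y') = dC (j + 1) c"
    using hom by (auto simp: C.bdry_iff)
  obtain v where v: "v \<in> cmp B (j + 1)" and c_v: "c = \<beta> (j + 1) v"
    using \<beta>_surj[OF c] by blast
  have dv: "dB (j + 1) v \<in> cmp B j"
    using B.d_closed[OF v] by simp
  define u where "u = gadd B j (gadd B j y y') (dB (j + 1) v)"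
  have u: "u \<in> cmp B j"
    using y y' dv by (simp add: u_def)
  have "\<beta> j u = gadd C j (dC (j + 1) c) (dC (j + 1) c)"
    using \<beta>_chain[OF v] y y' dv dc by (simp add: u_def \<beta>_add c_v)
  then have "\<beta> j u = gzero C j"
    using C.d_closed[OF c] by simp
  then obtain x2 where x2: "x2 \<in> cmp A j" and u_x2: "u = \<alpha> j x2"
    using exact[OF u] by blast
  have "dB j u = \<alpha> (j - 1) (gadd A (j - 1) x x')"
    using B.d_d[OF v] y y' dv x x' dy dy' by (simp add: u_def B.d_add \<alpha>_add \<alpha>_closed)
  moreover have "dB j u = \<alpha> (j - 1) (dA j x2)"
    using \<alpha>_chain[OF x2] u_x2 by simp
  ultimately have "gadd A (j - 1) x x' = dA j x2"
    using \<alpha>_inj[of "j - 1"] x x' A.d_closed[OF x2] by (simp add: inj_on_def)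
  then show ?thesis
    using x2 by (auto simp: A.bdry_iff)
qed

lemma \<beta>_preimage:
  assumes "z \<in> cmp C k"
  shows "(SOME y. y \<in> cmp B k \<and> \<beta> k y = z) \<in> cmp B k \<and> \<beta> k (SOME y. y \<in> cmp B k \<and> \<beta> k y = z) = z"
  using \<beta>_surj[OF assms] by (metis (mono_tags, lifting) someI_ex)

lemma connecting_hcls:
  assumes y: "y \<in> cmp B (k + 1)" and x: "x \<in> cmp A k" and dy: "dB (k + 1) y = \<alpha> k x"
  shows "connecting A dA B dB \<alpha> \<beta> (k + 1) (hcls C dC (k + 1) (\<beta> (k + 1) y)) = hcls A dA k x"
proof -
  define c0 where "c0 = (SOME c. c \<in> hcls C dC (k + 1) (\<beta> (k + 1) y))"
  define y0 where "y0 = (SOME y. y \<in> cmp B (k + 1) \<and> \<beta> (k + 1) y = c0)"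
  define x0 where "x0 = (SOME x. x \<in> cmp A k \<and> \<alpha> k x = dB (k + 1) y0)"
  obtain b where b: "b \<in> bdry C dC (k + 1)" and c0: "c0 = gadd C (k + 1) (\<beta> (k + 1) y) b"
    using C.some_in_hcls[OF \<beta>_closed[OF y]] unfolding c0_def by blast
  have b_C: "b \<in> cmp C (k + 1)" and db: "dC (k + 1) b = gzero C k"
    using C.bdry_zcyc[OF b] by (simp_all add: C.zcyc_iff)
  have "c0 \<in> cmp C (k + 1)"
    using y b_C by (simp add: c0 \<beta>_closed)
  then have y0: "y0 \<in> cmp B (k + 1)" "\<beta> (k + 1) y0 = c0"
    unfolding y0_def by (simp_all add: \<beta>_preimage)
  have "\<beta> k (dB (k + 1) y0) = dC (k + 1) c0"
    using \<beta>_chain[OF y0(1)] y0(2) by simp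
  also have "\<dots> = gzero C k"
    using \<beta>_chain[OF y] y x b_C db by (simp add: c0 C.d_add \<beta>_closed dy \<beta>_\<alpha>)
  finally have "\<exists>x. x \<in> cmp A k \<and> \<alpha> k x = dB (k + 1) y0"
    using exact[of "dB (k + 1) y0" k] B.d_closed[OF y0(1)] by auto
  then have "x0 \<in> cmp A k \<and> \<alpha> k x0 = dB (k + 1) y0"
    unfolding x0_def by (rule someI_ex)
  then have x0: "x0 \<in> cmp A k" "\<alpha> k x0 = dB (k + 1) y0"
    by simp_all
  have "gadd C (k + 1) (\<beta> (k + 1) y) (\<beta> (k + 1) y0) = b"
    using y b_C by (simp add: y0(2) c0 \<beta>_closed C.add_self_left)
  then have "gadd A k x x0 \<in> bdry A dA k"
    using connecting_lifts_homologous[of y "k + 1" y0 x x0] y y0 x x0 dy b by simp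
  then have "hcls A dA k x0 = hcls A dA k x"
    using A.hcls_eq_iff x x0(1) A.add_commute by metis
  then show ?thesis
    by (simp add: connecting_def x0_def y0_def c0_def)
qed

abbreviation K :: "'a set gmod" where
  "K \<equiv> ker_hmap A dA B dB \<alpha>"

lemma ker_hmap_cmp:
  "cmp K k = {X \<in> cmp A.H k. hmap B dB 0 \<alpha> k X = gzero B.H k}"
  by (simp add: ker_hmap_def)

lemma section_defect_lift:
  assumes "gfree V w A.H"
    and \<phi>: "ghom V w A.H A 0 \<phi>" and \<phi>_cyc: "\<And>k X. X \<in> cmp A.H k \<Longrightarrow> \<phi> k X \<in> zcyc A dA k"
    and \<psi>: "ghom V w B.H B 0 \<psi>" and \<psi>_cyc: "\<And>k Y. Y \<in> cmp B.H k \<Longrightarrow> \<psi> k Y \<in> zcyc B dB k"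
    and \<psi>_hcls: "\<And>k Y. Y \<in> cmp B.H k \<Longrightarrow> hcls B dB k (\<psi> k Y) = Y"
  obtains L where "ghom V w A.H B 1 L"
    "\<And>k X. X \<in> cmp A.H k \<Longrightarrow>
       dB (k + 1) (L k X) = gadd B k (\<alpha> k (\<phi> k X)) (\<psi> k (hcls B dB k (\<alpha> k (\<phi> k X))))"
proof -
  define u where "u k X = \<alpha> k (\<phi> k X)" for k X
  define v where "v k X = \<psi> k (hcls B dB k (u k X))" for k X
  have u_cyc: "u k X \<in> zcyc B dB k" if "X \<in> cmp A.H k" for k X
    using \<alpha>_zcyc[OF \<phi>_cyc[OF that]] by (simp add: u_def)
  have u: "ghom V w A.H B 0 u"
    using ghom_comp[OF \<phi> ghom_\<alpha>] by (simp add: u_def[abs_def])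
  have "ghom V w A.H B 0 v"
    using ghom_comp[OF B.ghom_hcls[OF u] \<psi>] u_cyc by (simp add: v_def[abs_def])
  then have uv: "ghom V w A.H B 0 (\<lambda>k X. gadd B k (u k X) (v k X))"
    using B.ghom_pointwise_add[OF u] by simp
  have uv_bdry: "gadd B k (u k X) (v k X) \<in> bdry B dB k" if "X \<in> cmp A.H k" for k X
  proof -
    have Y: "hcls B dB k (u k X) \<in> cmp B.H k"
      using u_cyc[OF that] by (simp add: B.homology_cmp)
    then have "hcls B dB k (u k X) = hcls B dB k (v k X)"
      using \<psi>_hcls[OF Y] by (simp add: v_def)
    then show ?thesis
      using B.hcls_eq_iff[of "u k X" k "v k X"] u_cyc[OF that] \<psi>_cyc[OF Y]
      by (simp add: v_def B.zcyc_iff)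
  qed
  obtain bas where bas: "gbasis V w A.H bas"
    using assms(1) by (auto simp: gfree_iff_gbasis)
  obtain L where "ghom V w A.H B 1 L"
    and "\<And>k X. X \<in> cmp A.H k \<Longrightarrow> dB (k + 1) (L k X) = gadd B k (u k X) (v k X)"
    using B.boundary_lift[OF A.homology_graded_module bas uv] uv_bdry by auto
  then show ?thesis
    using that by (simp add: u_def v_def)
qed

lemma kernel_boundary_lift:
  assumes "gfree V w A.H" and "gfree V w B.H"
  obtains \<phi> L where "\<And>k X. X \<in> cmp A.H k \<Longrightarrow> \<phi> k X \<in> zcyc A dA k"
    "\<And>k X. X \<in> cmp A.H k \<Longrightarrow> hcls A dA k (\<phi> k X) = X"
    "ghom V w A.H B 1 L"
    "\<And>k X. X \<in> cmp K k \<Longrightarrow> dB (k + 1) (L k X) = \<alpha> k (\<phi> k X)"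
proof -
  obtain \<phi> where \<phi>: "ghom V w A.H A 0 \<phi>"
    and \<phi>_cyc: "\<And>k X. X \<in> cmp A.H k \<Longrightarrow> \<phi> k X \<in> zcyc A dA k"
    and \<phi>_hcls: "\<And>k X. X \<in> cmp A.H k \<Longrightarrow> hcls A dA k (\<phi> k X) = X"
    using A.homology_section[OF assms(1)] by blast
  obtain \<psi> where \<psi>: "ghom V w B.H B 0 \<psi>"
    and \<psi>_cyc: "\<And>k Y. Y \<in> cmp B.H k \<Longrightarrow> \<psi> k Y \<in> zcyc B dB k"
    and \<psi>_hcls: "\<And>k Y. Y \<in> cmp B.H k \<Longrightarrow> hcls B dB k (\<psi> k Y) = Y"
    using B.homology_section[OF assms(2)] by blast
  obtain L where L: "ghom V w A.H B 1 L"
    and dL: "\<And>k X. X \<in> cmp A.H k \<Longrightarrow>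
       dB (k + 1) (L k X) = gadd B k (\<alpha> k (\<phi> k X)) (\<psi> k (hcls B dB k (\<alpha> k (\<phi> k X))))"
    using section_defect_lift[OF assms(1) \<phi> \<phi>_cyc \<psi> \<psi>_cyc \<psi>_hcls] by blast
  have dL_ker: "dB (k + 1) (L k X) = \<alpha> k (\<phi> k X)" if "X \<in> cmp K k" for k X
  proof -
    interpret HB: graded_module_pair V w B.H B
      by (intro graded_module_pair.intro B.homology_graded_module B.graded_module_axioms)
    have X: "X \<in> cmp A.H k" "hmap B dB 0 \<alpha> k X = gzero B.H k"
      using that by (simp_all add: ker_hmap_cmp)
    then have "hcls B dB k (\<alpha> k (\<phi> k X)) = gzero B.H k"
      using hmap_hcls[of "\<phi> k X" k] \<phi>_cyc[OF X(1)] \<phi>_hcls[OF X(1)] by (simp add: A.zcyc_iff)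
    then show ?thesis
      using dL[OF X(1)] HB.ghom_zero[OF \<psi>] \<alpha>_zcyc[OF \<phi>_cyc[OF X(1)]] by (simp add: B.zcyc_iff)
  qed
  show ?thesis
    by (rule that[OF \<phi>_cyc \<phi>_hcls L dL_ker])
qed

theorem kernel_splitting:
  assumes "gfree V w A.H" and "gfree V w B.H"
  shows "\<exists>s. ghom V w K C.H 1 s \<and>
    (\<forall>k X. X \<in> cmp K k \<longrightarrow> connecting A dA B dB \<alpha> \<beta> (k + 1) (s k X) = X)"
proof -
  obtain \<phi> L where \<phi>_cyc: "\<And>k X. X \<in> cmp A.H k \<Longrightarrow> \<phi> k X \<in> zcyc A dA k"
    and \<phi>_hcls: "\<And>k X. X \<in> cmp A.H k \<Longrightarrow> hcls A dA k (\<phi> k X) = X"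
    and L: "ghom V w A.H B 1 L"
    and dL: "\<And>k X. X \<in> cmp K k \<Longrightarrow> dB (k + 1) (L k X) = \<alpha> k (\<phi> k X)"
    using kernel_boundary_lift[OF assms] by blast
  have K_sub: "cmp K k \<subseteq> cmp A.H k" for k
    by (auto simp: ker_hmap_cmp)
  have "ghom V w K B 1 L"
    using ghom_restrict_domain[OF L, of "cmp K"] K_sub by (simp add: ker_hmap_def)
  then have \<beta>L: "ghom V w K C 1 (\<lambda>k X. \<beta> (k + 1) (L k X))"
    using ghom_comp[OF _ ghom_\<beta>] by fastforce
  have cyc: "\<beta> (k + 1) (L k X) \<in> zcyc C dC (k + 1)" if X: "X \<in> cmp K k" for k X
  proof -
    have "X \<in> cmp A.H k"
      using K_sub X by blast
    then have "L k X \<in> cmp B (k + 1)" and "\<phi> k X \<in> cmp A k"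
      using ghom_closed[OF L] \<phi>_cyc by (auto simp: A.zcyc_iff)
    then show ?thesis
      using \<beta>_chain[of "L k X" "k + 1"] dL[OF X] by (simp add: C.zcyc_iff \<beta>_closed \<beta>_\<alpha>)
  qed
  show ?thesis
  proof (intro exI conjI allI impI)
    show "ghom V w K C.H 1 (\<lambda>k X. hcls C dC (k + 1) (\<beta> (k + 1) (L k X)))"
      using C.ghom_hcls[OF \<beta>L cyc] .
    fix k X assume X: "X \<in> cmp K k"
    then have XH: "X \<in> cmp A.H k"
      using K_sub by blast
    have "\<phi> k X \<in> cmp A k"
      using \<phi>_cyc[OF XH] by (simp add: A.zcyc_iff)
    then show "connecting A dA B dB \<alpha> \<beta> (k + 1) (hcls C dC (k + 1) (\<beta> (k + 1) (L k X))) = X"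
      using connecting_hcls[OF ghom_closed[OF L XH] _ dL[OF X]] \<phi>_hcls[OF XH] by simp
  qed
qed

end

theorem lemma3p12:
  fixes V :: "nat set" and w :: "nat \<Rightarrow> int"
    and A :: "'a gmod" and dA :: "int \<Rightarrow> 'a \<Rightarrow> 'a"
    and B :: "'b gmod" and dB :: "int \<Rightarrow> 'b \<Rightarrow> 'b"
    and C :: "'c gmod" and dC :: "int \<Rightarrow> 'c \<Rightarrow> 'c"
    and \<alpha> :: "int \<Rightarrow> 'a \<Rightarrow> 'b" and \<beta> :: "int \<Rightarrow> 'b \<Rightarrow> 'c"
  assumes R: "graded_poly_ring V w"
    and ses: "dg_ses V w A dA B dB C dC \<alpha> \<beta>"
    and freeA: "gfree V w A" and freeB: "gfree V w B" and freeC: "gfree V w C"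
    and freeHA: "gfree V w (homology A dA)" and freeHB: "gfree V w (homology B dB)"
  shows "\<exists>s. ghom V w (ker_hmap A dA B dB \<alpha>) (homology C dC) 1 s \<and>
             (\<forall>k X. X \<in> cmp (ker_hmap A dA B dB \<alpha>) k \<longrightarrow>
                connecting A dA B dB \<alpha> \<beta> (k + 1) (s k X) = X)"
proof -
  interpret dg_short_exact V w A dA B dB C dC \<alpha> \<beta>
    using ses by unfold_locales
  show ?thesis
    using kernel_splitting[OF freeHA freeHB] .
qed

end
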